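(* Let $\beta>1$ and let $m\ge1$ be an integer with $m\ge C_\beta:=\frac1{2J}\exp(\beta^{1/(\beta-1)})$. Let $a\in\mathcal A$ be an action. For each $j\in\mathcal J$, let $\hat Q_j(t)$ and $\underline Q_j(t)$, $t\ge0$, be queue-length processes of an $M/M/1$ queue with arrival rate $\tilde\lambda^a_j$ and service rate $\mu_j$, coupled so that both are driven by the same Poisson arrival stream of rate $\tilde\lambda^a_j$ and the same Poisson stream of potential service completions of rate $\mu_j$ (a potential completion decreases the queue length by one if it is positive), with $\underline Q_j(0)=0$ and $\hat Q_j(0)$ drawn from the stationary distribution $\mathbb P(\hat Q_j(0)=n)=(1-\rho^a_j)(\rho^a_j)^n$; the pairs are independent across $j$. Let $\tau_m=\alpha\ln^\beta(2Jm)$. Then for every $t\ge\tau_m$, $$\mathbb P\bigl(\underline Q_j(t)=\hat Q_j(t)\ \text{for all } j\in\mathcal J\bigr)\ge1-\frac1{m^\beta}.$$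
   Context: There are $J$ servers $\mathcal J=\{1,\dots,J\}$ with service rates $\mu_j>0$. $\mathcal A$ is a finite set of actions; action $a$ determines for each server $j$ a total arrival rate $\tilde\lambda^a_j>0$ with load $\rho^a_j=\tilde\lambda^a_j/\mu_j\in(0,1)$ (in the paper, $\tilde\lambda^a_j=\sum_{i}x^a_{ij}$ is the arrival rate to server $j$'s virtual queue under the routing rates of a basic feasible solution $x^a$ of the routing LP with slack $\varepsilon>0$). The constant $\alpha\ge1$ satisfies $$\alpha\ge\max_{j\in\mathcal J}\max_{a\in\mathcal A}\Bigl\{\frac{3(\tilde\lambda^a_j+\mu_j)\ln(\rho^a_j)-2\sqrt{(\mu_j-\tilde\lambda^a_j)^2+9\tilde\lambda^a_j\mu_j\ln^2(\rho^a_j)}}{2(\mu_j-\tilde\lambda^a_j)^2\ln(\rho^a_j)},1\Bigr\}.$$ *)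

theory Defs
  imports "HOL-Probability.Probability"
begin

text \<open>Counting process of a renewal stream with inter-event times E 0, E 1, ...:
  number of events in [0,t]. With i.i.d. Exp(r) inter-event times this is a
  Poisson process of rate r.\<close>
definition count_proc :: "(nat \<Rightarrow> real) \<Rightarrow> real \<Rightarrow> nat" where
  "count_proc E t = card {n. (\<Sum>k\<le>n. E k) \<le> t}"

definition netput :: "nat \<Rightarrow> (nat \<Rightarrow> real) \<Rightarrow> (nat \<Rightarrow> real) \<Rightarrow> real \<Rightarrow> int" where
  "netput q0 EA ES t = int q0 + int (count_proc EA t) - int (count_proc ES t)"

text \<open>Queue length of a single-server queue with initial length q0, arrival stream EA
  and potential-service stream ES, where a potential completion decreases the queue by
  one iff it is positive (one-sided Skorokhod reflection of the netput process).\<close>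
definition queue_len :: "nat \<Rightarrow> (nat \<Rightarrow> real) \<Rightarrow> (nat \<Rightarrow> real) \<Rightarrow> real \<Rightarrow> int" where
  "queue_len q0 EA ES t =
     netput q0 EA ES t - min 0 (Inf ((\<lambda>s. netput q0 EA ES s) ` {0..t}))"

text \<open>Sources of randomness: initial state of server j, k-th inter-arrival time of
  server j, k-th inter-potential-service time of server j.\<close>
datatype src = Init nat | Arr nat nat | Srv nat nat

definition src_rv :: "(nat \<Rightarrow> 'w \<Rightarrow> nat) \<Rightarrow> (nat \<Rightarrow> nat \<Rightarrow> 'w \<Rightarrow> real)
    \<Rightarrow> (nat \<Rightarrow> nat \<Rightarrow> 'w \<Rightarrow> real) \<Rightarrow> src \<Rightarrow> 'w \<Rightarrow> real" where
  "src_rv Q0 EA ES i = (case i of Init j \<Rightarrow> (\<lambda>w. real (Q0 j w))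
                                   | Arr j k \<Rightarrow> EA j k | Srv j k \<Rightarrow> ES j k)"

definition src_set :: "nat \<Rightarrow> src set" where
  "src_set J = {Init j | j. j \<in> {1..J}} \<union> {Arr j k | j k. j \<in> {1..J}}
               \<union> {Srv j k | j k. j \<in> {1..J}}"

definition alpha_bound :: "real \<Rightarrow> real \<Rightarrow> real" where
  "alpha_bound l mu = (let r = l / mu in
     (3 * (l + mu) * ln r - 2 * sqrt ((mu - l)^2 + 9 * l * mu * (ln r)^2))
       / (2 * (mu - l)^2 * ln r))"

end

theory Submission
  imports Defs
begin

(*
  Both queues are driven by the same arrivals and potential services, and the reflected
  queue started at q equals max (q + X t) (X t - min X) for the free process X started at 0.
  Hence the two queues agree at time t as soon as q + X t <= 0, i.e. as soon as the
  potential services in [0, t] outnumber the initial content plus the arrivals. The initial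
  content is geometric and the two counts are independent Poisson variables, so a Chernoff
  bound with the weight (mu / lambda) ^ (1 / 2) per unit of netput bounds the failure
  probability of one server by 2 exp (- t (sqrt mu - sqrt lambda)^2). The bound on alpha
  makes t (sqrt mu - sqrt lambda)^2 >= ln^beta (2 J m) >= beta ln (2 J m), and a union
  bound over the J servers finishes the proof.
*)

section \<open>Measurability of the queue length\<close>

lemma Inf_int_eq_iff:
  fixes S :: "int set"
  shows "Inf S = k \<longleftrightarrow> (k \<in> S \<and> (\<forall>v\<in>S. k \<le> v)) \<or> ((\<forall>m\<in>S. \<exists>v\<in>S. v < m) \<and> Inf {} = k)"
proof (cases "\<exists>m\<in>S. \<forall>v\<in>S. m \<le> v")
  case True
  then obtain m where "m \<in> S" "\<forall>v\<in>S. m \<le> v" by blast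
  moreover from this have "Inf S = m" by (intro cInf_eq_minimum) auto
  ultimately show ?thesis by force
next
  case False
  then have "(\<lambda>x. x \<in> uminus ` S \<and> (\<forall>y\<in>uminus ` S. y \<le> x)) = (\<lambda>x. False)"
    by (force simp: minus_le_iff)
  then have "Inf S = Inf {}"
    unfolding Inf_int_def Sup_int_def by simp
  moreover have "\<forall>m\<in>S. \<exists>v\<in>S. v < m"
    using False by (auto simp: not_le)
  ultimately show ?thesis using False by auto
qed

lemma measurable_Inf_int:
  fixes S :: "'w \<Rightarrow> int set"
  assumes [measurable]: "\<And>k. {w \<in> space M. k \<in> S w} \<in> sets M"
  shows "(\<lambda>w. Inf (S w)) \<in> measurable M (count_space UNIV)"
  unfolding measurable_count_space_eq2_countable
proof safe
  fix k :: int
  have "(\<lambda>w. Inf (S w)) -` {k} \<inter> space M = {w \<in> space M. Inf (S w) = k}"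
    by auto
  also have "\<dots> =
      {w \<in> space M. (k \<in> S w \<and> (\<forall>v. v \<in> S w \<longrightarrow> k \<le> v))
                  \<or> ((\<forall>m. m \<in> S w \<longrightarrow> (\<exists>v. v \<in> S w \<and> v < m)) \<and> Inf {} = k)}"
    by (simp only: Inf_int_eq_iff[where S="S _"] Ball_def Bex_def)
  also have "\<dots> \<in> sets M"
    by measurable
  finally show "(\<lambda>w. Inf (S w)) -` {k} \<inter> space M \<in> sets M" .
qed simp

lemma eventually_sequentially_iff_finite:
  "eventually P sequentially \<longleftrightarrow> finite {n. \<not> P n}"
  using eventually_cofinite[of P] by (simp add: cofinite_eq_sequentially)

lemma liminf_eq_if_finite_below_infinite_above:
  fixes S :: "nat \<Rightarrow> real"
  assumes fin: "finite {n. S n \<le> s}" and inf: "\<And>s'. s < s' \<Longrightarrow> infinite {n. S n \<le> s'}"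
  shows "liminf (\<lambda>n. ereal (S n)) = ereal s"
proof (rule antisym)
  have ev: "eventually (\<lambda>n. s < S n) sequentially"
    unfolding eventually_sequentially_iff_finite by (simp add: not_less fin)
  show "ereal s \<le> liminf (\<lambda>n. ereal (S n))"
    unfolding le_Liminf_iff
  proof (intro allI impI)
    fix y assume "y < ereal s"
    show "eventually (\<lambda>n. y < ereal (S n)) sequentially"
      using ev by (rule eventually_mono) (simp add: order.strict_trans[OF \<open>y < ereal s\<close>])
  qed
  show "liminf (\<lambda>n. ereal (S n)) \<le> ereal s"
  proof (rule ccontr)
    assume "\<not> liminf (\<lambda>n. ereal (S n)) \<le> ereal s"
    then obtain s' where s': "ereal s < ereal s'" "ereal s' < liminf (\<lambda>n. ereal (S n))"
      using ereal_dense2[of "ereal s"] by (auto simp: not_le)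
    then have "eventually (\<lambda>n. ereal s' < ereal (S n)) sequentially"
      using le_Liminf_iff[THEN iffD1, OF order_refl, rule_format, OF s'(2)] by simp
    then have "finite {n. S n \<le> s'}"
      unfolding eventually_sequentially_iff_finite by (simp add: not_less)
    with inf s'(1) show False by simp
  qed
qed

(* Right-continuity of s \<mapsto> card {n. S n \<le> s} can only fail at liminf S, where the count
   may drop from a finite value to 0, the value of card on infinite sets. *)
lemma card_le_locally_constant_right:
  fixes S :: "nat \<Rightarrow> real"
  assumes "ereal s \<noteq> liminf (\<lambda>n. ereal (S n))"
  shows "\<exists>d>0. \<forall>s'. s \<le> s' \<and> s' < s + d \<longrightarrow> card {n. S n \<le> s'} = card {n. S n \<le> s}"
proof (cases "finite {n. S n \<le> s}")
  case False
  then have "infinite {n. S n \<le> s'}" if "s \<le> s'" for s'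
    using that by (intro contrapos_nn[OF False]) (erule finite_subset[rotated], auto)
  with False show ?thesis by (intro exI[of _ 1]) auto
next
  case True
  have "\<exists>s1>s. finite {n. S n \<le> s1}"
  proof (rule ccontr)
    assume "\<not> (\<exists>s1>s. finite {n. S n \<le> s1})"
    then have "liminf (\<lambda>n. ereal (S n)) = ereal s"
      using True by (intro liminf_eq_if_finite_below_infinite_above) auto
    with assms show False by simp
  qed
  then obtain s1 where s1: "s < s1" "finite {n. S n \<le> s1}"
    by blast
  obtain d where d: "0 < d" "\<forall>x \<in> S ` {n. S n \<le> s1}. x \<noteq> s \<longrightarrow> d \<le> dist s x"
    using finite_set_avoid[OF finite_imageI[OF s1(2)]] by blast
  have same: "{n. S n \<le> s'} = {n. S n \<le> s}" if "s \<le> s'" "s' < s + min d (s1 - s)" for s'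
  proof safe
    fix n assume n: "S n \<le> s'"
    show "S n \<le> s"
    proof (rule ccontr)
      assume "\<not> S n \<le> s"
      moreover have "S n \<le> s1" using n that by linarith
      ultimately have "d \<le> S n - s" using d(2) by (auto simp: dist_real_def)
      then show False using n that by linarith
    qed
  qed (use that in auto)
  show ?thesis
  proof (intro exI[of _ "min d (s1 - s)"] conjI allI impI)
    show "0 < min d (s1 - s)" using d(1) s1(1) by simp
    fix s' assume "s \<le> s' \<and> s' < s + min d (s1 - s)"
    then show "card {n. S n \<le> s'} = card {n. S n \<le> s}" using same[of s'] by simp
  qed
qed

lemma image_eq_image_dense_if_locally_constant_right:
  fixes f :: "real \<Rightarrow> 'b"
  assumes "\<And>s. s \<in> {a..<b} \<Longrightarrow> s \<notin> D \<Longrightarrow> \<exists>d>0. \<forall>s'. s \<le> s' \<and> s' < s + d \<longrightarrow> f s' = f s"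
  shows "f ` {a..b} = f ` ({a..b} \<inter> insert b (\<rat> \<union> D))"
proof
  show "f ` ({a..b} \<inter> insert b (\<rat> \<union> D)) \<subseteq> f ` {a..b}"
    by (rule image_mono) blast
  show "f ` {a..b} \<subseteq> f ` ({a..b} \<inter> insert b (\<rat> \<union> D))"
  proof (rule image_subsetI)
    fix s assume s: "s \<in> {a..b}"
    show "f s \<in> f ` ({a..b} \<inter> insert b (\<rat> \<union> D))"
    proof (cases "s \<in> insert b (\<rat> \<union> D)")
      case True
      with s show ?thesis by (intro imageI) simp
    next
      case False
      with s have "s \<in> {a..<b}" "s \<notin> D" by auto
      then obtain d where d: "0 < d" "\<forall>s'. s \<le> s' \<and> s' < s + d \<longrightarrow> f s' = f s"
        using assms by blast
      obtain r where r: "r \<in> \<rat>" "s < r" "r < min (s + d) b"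
        using Rats_dense_in_real[of s "min (s + d) b"] d(1) \<open>s \<in> {a..<b}\<close> by auto
      then have "s \<le> r \<and> r < s + d" by simp
      then have "f s = f r" using d(2) by metis
      moreover have "r \<in> {a..b} \<inter> insert b (\<rat> \<union> D)" using r s by auto
      ultimately show ?thesis by (rule image_eqI)
    qed
  qed
qed

lemma measurable_count_proc[measurable]:
  fixes E :: "'w \<Rightarrow> nat \<Rightarrow> real"
  assumes [measurable]: "\<And>k. (\<lambda>w. E w k) \<in> borel_measurable M" "s \<in> borel_measurable M"
  shows "(\<lambda>w. count_proc (E w) (s w)) \<in> measurable M (count_space UNIV)"
  unfolding count_proc_def by measurable

lemma measurable_netput[measurable]:
  fixes EA ES :: "'w \<Rightarrow> nat \<Rightarrow> real"
  assumes [measurable]: "Q \<in> measurable M (count_space UNIV)"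
    "\<And>k. (\<lambda>w. EA w k) \<in> borel_measurable M" "\<And>k. (\<lambda>w. ES w k) \<in> borel_measurable M"
    "s \<in> borel_measurable M"
  shows "(\<lambda>w. netput (Q w) (EA w) (ES w) (s w)) \<in> measurable M (count_space UNIV)"
  unfolding netput_def by measurable

lemma count_proc_locally_constant_right:
  assumes "s \<noteq> real_of_ereal (liminf (\<lambda>n. ereal (\<Sum>k\<le>n. E k)))"
  shows "\<exists>d>0. \<forall>s'. s \<le> s' \<and> s' < s + d \<longrightarrow> count_proc E s' = count_proc E s"
  unfolding count_proc_def
  by (rule card_le_locally_constant_right) (use assms in \<open>metis real_of_ereal.simps(1)\<close>)

lemma netput_locally_constant_right:
  assumes "s \<noteq> real_of_ereal (liminf (\<lambda>n. ereal (\<Sum>k\<le>n. EA k)))"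
    and "s \<noteq> real_of_ereal (liminf (\<lambda>n. ereal (\<Sum>k\<le>n. ES k)))"
  shows "\<exists>d>0. \<forall>s'. s \<le> s' \<and> s' < s + d \<longrightarrow> netput q EA ES s' = netput q EA ES s"
proof -
  obtain dA where dA: "0 < dA" "\<forall>s'. s \<le> s' \<and> s' < s + dA \<longrightarrow> count_proc EA s' = count_proc EA s"
    using count_proc_locally_constant_right[OF assms(1)] by blast
  obtain dS where dS: "0 < dS" "\<forall>s'. s \<le> s' \<and> s' < s + dS \<longrightarrow> count_proc ES s' = count_proc ES s"
    using count_proc_locally_constant_right[OF assms(2)] by blast
  show ?thesis
  proof (intro exI[of _ "min dA dS"] conjI allI impI)
    show "0 < min dA dS" using dA(1) dS(1) by simp
    fix s' assume "s \<le> s' \<and> s' < s + min dA dS"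
    then have "s \<le> s' \<and> s' < s + dA" "s \<le> s' \<and> s' < s + dS" by auto
    then show "netput q EA ES s' = netput q EA ES s"
      unfolding netput_def using dA(2) dS(2) by metis
  qed
qed

lemma measurable_queue_len[measurable]:
  fixes EA ES :: "'w \<Rightarrow> nat \<Rightarrow> real"
  assumes [measurable]: "Q \<in> measurable M (count_space UNIV)"
    "\<And>k. (\<lambda>w. EA w k) \<in> borel_measurable M" "\<And>k. (\<lambda>w. ES w k) \<in> borel_measurable M"
  shows "(\<lambda>w. queue_len (Q w) (EA w) (ES w) t) \<in> measurable M (count_space UNIV)"
proof -
  define F where "F w s = netput (Q w) (EA w) (ES w) s" for w s
  define thr where "thr E = real_of_ereal (liminf (\<lambda>n. ereal (\<Sum>k\<le>n. E k)))" for E :: "nat \<Rightarrow> real"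
  have [measurable]: "(\<lambda>w. thr (EA w)) \<in> borel_measurable M" "(\<lambda>w. thr (ES w)) \<in> borel_measurable M"
    unfolding thr_def by measurable
  \<comment> \<open>The running minimum over [0, t] is attained on the rationals, t, and the points where
    one of the counting processes fails to be right-continuous.\<close>
  have image_F: "F w ` {0..t} = F w ` ({0..t} \<inter> insert t (\<rat> \<union> {thr (EA w), thr (ES w)}))" for w
    unfolding F_def thr_def
    by (rule image_eq_image_dense_if_locally_constant_right, rule netput_locally_constant_right) auto
  have "{w \<in> space M. k \<in> F w ` {0..t}} \<in> sets M" for k
  proof -
    have "{w \<in> space M. k \<in> F w ` {0..t}} = {w \<in> space M. (\<exists>r\<in>\<rat>. r \<in> {0..t} \<and> F w r = k)
        \<or> (0 \<le> t \<and> F w t = k) \<or> (thr (EA w) \<in> {0..t} \<and> F w (thr (EA w)) = k)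
        \<or> (thr (ES w) \<in> {0..t} \<and> F w (thr (ES w)) = k)}"
      unfolding image_F by auto
    also have "\<dots> \<in> sets M"
      unfolding F_def using countable_rat by measurable
    finally show ?thesis .
  qed
  then have [measurable]: "(\<lambda>w. Inf (F w ` {0..t})) \<in> measurable M (count_space UNIV)"
    by (rule measurable_Inf_int)
  have [measurable]: "(\<lambda>w. F w t) \<in> measurable M (count_space UNIV)"
    unfolding F_def by measurable
  have "(\<lambda>w. F w t - min 0 (Inf (F w ` {0..t}))) \<in> measurable M (count_space UNIV)"
    by measurable
  then show ?thesis
    unfolding queue_len_def F_def by simp
qed

lemma sets_Collect_queue_len_eq:
  fixes EA ES :: "'w \<Rightarrow> nat \<Rightarrow> real"
  assumes [measurable]: "Q \<in> measurable M (count_space UNIV)"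
    "\<And>k. (\<lambda>w. EA w k) \<in> borel_measurable M" "\<And>k. (\<lambda>w. ES w k) \<in> borel_measurable M"
  shows "{w \<in> space M. queue_len 0 (EA w) (ES w) t = queue_len (Q w) (EA w) (ES w) t} \<in> sets M"
  by measurable

section \<open>Coupling of the two queues\<close>

lemma int_set_has_minimum:
  fixes V :: "int set"
  assumes "v \<in> V" and "\<And>x. x \<in> V \<Longrightarrow> b \<le> x"
  shows "\<exists>m\<in>V. \<forall>x\<in>V. m \<le> x"
proof -
  obtain m where m: "m \<in> V" and least: "\<forall>x. x \<in> V \<longrightarrow> nat (m - b) \<le> nat (x - b)"
    using ex_has_least_nat[of "\<lambda>x. x \<in> V" v "\<lambda>x. nat (x - b)"] assms(1) by blast
  have "m \<le> x" if "x \<in> V" for x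
  proof -
    have "nat (m - b) \<le> nat (x - b)"
      using least that by blast
    then show ?thesis
      using assms(2)[OF that] by (subst (asm) nat_le_eq_zle) auto
  qed
  with m show ?thesis by blast
qed

lemma queue_len_eq_if_netput_nonpos:
  fixes EA ES :: "nat \<Rightarrow> real"
  assumes fin: "finite {n. (\<Sum>k\<le>n. ES k) \<le> t}" and t: "0 \<le> t" and le: "netput q EA ES t \<le> 0"
  shows "queue_len 0 EA ES t = queue_len q EA ES t"
proof -
  define X where "X s = netput 0 EA ES s" for s
  have Xq: "netput q EA ES s = int q + X s" for s
    by (simp add: X_def netput_def)
  have lb: "- int (count_proc ES t) \<le> x" if "x \<in> X ` {0..t}" for x
  proof -
    obtain s where s: "s \<in> {0..t}" "x = X s" using \<open>x \<in> X ` {0..t}\<close> by blast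
    have "count_proc ES s \<le> count_proc ES t"
      unfolding count_proc_def using s(1) by (intro card_mono[OF fin]) auto
    then show ?thesis by (simp add: s(2) X_def netput_def)
  qed
  have "\<exists>m\<in>X ` {0..t}. \<forall>x\<in>X ` {0..t}. m \<le> x"
    by (rule int_set_has_minimum[of "X t", OF _ lb]) (use t in simp)
  then obtain m where m: "m \<in> X ` {0..t}" "\<forall>x\<in>X ` {0..t}. m \<le> x"
    by blast
  have "Inf ((\<lambda>s. netput 0 EA ES s) ` {0..t}) = m"
    using m by (intro cInf_eq_minimum) (auto simp: X_def)
  moreover have "Inf ((\<lambda>s. netput q EA ES s) ` {0..t}) = int q + m"
    using m by (intro cInf_eq_minimum) (auto simp: Xq)
  moreover have "int q + m \<le> 0"
    using m(2) t le by (force simp: Xq)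
  ultimately show ?thesis
    unfolding queue_len_def using Xq[of t] m by (simp add: X_def)
qed

section \<open>Poisson counts of exponential renewal streams\<close>

lemma less_card_partial_sums_le_iff:
  fixes E :: "nat \<Rightarrow> real"
  assumes nonneg: "\<And>k. 0 \<le> E k" and fin: "finite {n. (\<Sum>i\<le>n. E i) \<le> t}"
  shows "k < card {n. (\<Sum>i\<le>n. E i) \<le> t} \<longleftrightarrow> (\<Sum>i\<le>k. E i) \<le> t"
proof
  have mono: "(\<Sum>i\<le>m. E i) \<le> (\<Sum>i\<le>n. E i)" if "m \<le> n" for m n
    using that nonneg by (intro sum_mono2) auto
  show "(\<Sum>i\<le>k. E i) \<le> t" if "k < card {n. (\<Sum>i\<le>n. E i) \<le> t}"
  proof (rule ccontr)
    assume "\<not> (\<Sum>i\<le>k. E i) \<le> t"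
    then have "n < k" if "(\<Sum>i\<le>n. E i) \<le> t" for n
      using mono[of k n] that by (metis le_less_linear order.trans)
    then have "{n. (\<Sum>i\<le>n. E i) \<le> t} \<subseteq> {..<k}"
      by auto
    then have "card {n. (\<Sum>i\<le>n. E i) \<le> t} \<le> k"
      using card_mono[OF finite_lessThan] by fastforce
    with that show False by simp
  qed
  show "k < card {n. (\<Sum>i\<le>n. E i) \<le> t}" if "(\<Sum>i\<le>k. E i) \<le> t"
  proof -
    have "{..k} \<subseteq> {n. (\<Sum>i\<le>n. E i) \<le> t}"
      using mono that by (auto intro: order_trans)
    then have "card {..k} \<le> card {n. (\<Sum>i\<le>n. E i) \<le> t}"
      by (rule card_mono[OF fin])
    then show ?thesis by simp
  qed
qed

lemma partial_sums_le_if_infinite: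
  fixes E :: "nat \<Rightarrow> real"
  assumes nonneg: "\<And>k. 0 \<le> E k" and inf: "infinite {n. (\<Sum>k\<le>n. E k) \<le> t}"
  shows "(\<Sum>k\<le>n. E k) \<le> t"
proof -
  obtain m where "n \<le> m" "(\<Sum>k\<le>m. E k) \<le> t"
    using inf by (auto simp: infinite_nat_iff_unbounded_le)
  moreover have "(\<Sum>k\<le>n. E k) \<le> (\<Sum>k\<le>m. E k)"
    using nonneg \<open>n \<le> m\<close> by (intro sum_mono2) auto
  ultimately show ?thesis
    by linarith
qed

lemma poisson_sums: "(\<lambda>k. x ^ k / fact k * exp (- x)) sums (1 :: real)"
proof -
  have "(\<lambda>k. x ^ k / fact k * exp (- x)) sums (exp x * exp (- x))"
    using exp_converges[of x] by (intro sums_mult2) (simp add: divide_inverse_commute scaleR_conv_of_real)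
  then show ?thesis by (simp add: exp_minus)
qed

lemma erlang_CDF_tendsto_0:
  assumes "0 \<le> x"
  shows "(\<lambda>k. erlang_CDF k r x) \<longlonglongrightarrow> 0"
proof -
  have "(\<lambda>k. (r * x) ^ k / fact k * exp (- (r * x))) sums 1"
    by (rule poisson_sums)
  then have "(\<lambda>k. \<Sum>n<Suc k. (r * x) ^ n / fact n * exp (- (r * x))) \<longlonglongrightarrow> 1"
    unfolding sums_def by (rule LIMSEQ_Suc)
  then have "(\<lambda>k. 1 - (\<Sum>n\<le>k. (r * x) ^ n / fact n * exp (- (r * x)))) \<longlonglongrightarrow> 1 - 1"
    unfolding lessThan_Suc_atMost by (intro tendsto_intros)
  then show ?thesis
    using assms by (simp add: erlang_CDF_def field_simps)
qed

lemma borel_measurable_countable_iff: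
  fixes f :: "'a \<Rightarrow> 'b :: {countable, t2_space}"
  shows "f \<in> borel_measurable M \<longleftrightarrow> f \<in> measurable M (count_space UNIV)"
  by (simp add: measurable_cong_sets[OF refl sets_borel_eq_count_space])

lemma nn_integral_nat_valued:
  fixes N :: "'a \<Rightarrow> nat" and f :: "nat \<Rightarrow> ennreal"
  assumes [measurable]: "N \<in> measurable M (count_space UNIV)"
  shows "(\<integral>\<^sup>+w. f (N w) \<partial>M) = (\<Sum>k. f k * emeasure M {w \<in> space M. N w = k})"
proof -
  have "(\<integral>\<^sup>+w. f (N w) \<partial>M) = (\<integral>\<^sup>+w. (\<Sum>k. f k * indicator {w \<in> space M. N w = k} w) \<partial>M)"
    by (intro nn_integral_cong suminf_cmult_indicator[symmetric]) (auto simp: disjoint_family_on_def)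
  also have "\<dots> = (\<Sum>k. \<integral>\<^sup>+w. f k * indicator {w \<in> space M. N w = k} w \<partial>M)"
    by (rule nn_integral_suminf) measurable
  finally show ?thesis
    by (simp add: nn_integral_cmult_indicator)
qed

context prob_space
begin

lemma AE_exponentials_pos:
  fixes E :: "nat \<Rightarrow> 'a \<Rightarrow> real"
  assumes E: "\<And>k. distributed M lborel (E k) (exponential_density r)" and r: "0 < r"
  shows "AE w in M. \<forall>k. 0 < E k w"
  unfolding AE_all_countable
proof
  fix k
  have [measurable]: "E k \<in> borel_measurable M"
    using distributed_measurable[OF E] by simp
  have "emeasure M {w \<in> space M. E k w \<le> 0} = 0"
    using exponential_distributedD_le[OF E order_refl r] by (simp add: emeasure_eq_measure)
  then show "AE w in M. 0 < E k w"
    by (subst AE_iff_measurable[of "{w \<in> space M. E k w \<le> 0}"]) (auto simp: not_less)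
qed

lemma prob_partial_sum_le_eq_erlang_CDF:
  fixes E :: "nat \<Rightarrow> 'a \<Rightarrow> real"
  assumes r: "0 < r" and t: "0 \<le> t"
    and E: "\<And>k. distributed M lborel (E k) (exponential_density r)"
    and ind: "indep_vars (\<lambda>_. borel) E UNIV"
  shows "prob {w \<in> space M. (\<Sum>k\<le>n. E k w) \<le> t} = erlang_CDF n r t"
proof -
  have "distributed M lborel (\<lambda>w. \<Sum>k\<in>{..n}. E k w) (erlang_density (card {..n} - 1) r)"
    by (rule exponential_distributed_sum[OF _ _ r E indep_vars_subset[OF ind]]) auto
  then show ?thesis
    using erlang_distributed_le[OF _ r t] by simp
qed

lemma AE_finite_partial_sums_le:
  fixes E :: "nat \<Rightarrow> 'a \<Rightarrow> real"
  assumes r: "0 < r" and t: "0 \<le> t"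
    and E: "\<And>k. distributed M lborel (E k) (exponential_density r)"
    and ind: "indep_vars (\<lambda>_. borel) E UNIV"
  shows "AE w in M. finite {n. (\<Sum>k\<le>n. E k w) \<le> t}"
proof -
  have [measurable]: "E k \<in> borel_measurable M" for k
    using distributed_measurable[OF E] by simp
  define B where "B = {w \<in> space M. \<forall>n. (\<Sum>k\<le>n. E k w) \<le> t}"
  have [measurable]: "B \<in> sets M"
    unfolding B_def by measurable
  have "prob B \<le> erlang_CDF n r t" for n
    using finite_measure_mono[of B "{w \<in> space M. (\<Sum>k\<le>n. E k w) \<le> t}"]
      prob_partial_sum_le_eq_erlang_CDF[OF r t E ind, of n] by (auto simp: B_def)
  then have "prob B \<le> 0"
    by (intro LIMSEQ_le_const[OF erlang_CDF_tendsto_0[OF t]]) auto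
  then have "B \<in> null_sets M"
    using \<open>B \<in> sets M\<close> by (simp add: null_sets_def emeasure_eq_measure measure_le_0_iff)
  then have "AE w in M. w \<notin> B"
    by (rule AE_not_in)
  moreover have "AE w in M. \<forall>k. 0 < E k w"
    by (rule AE_exponentials_pos[where E=E, OF E r])
  ultimately show ?thesis
    using AE_space
  proof eventually_elim
    case (elim w)
    then show ?case
      using partial_sums_le_if_infinite[of "\<lambda>k. E k w" t] by (auto simp: B_def less_imp_le)
  qed
qed

lemma prob_count_proc_eq_poisson:
  fixes E :: "nat \<Rightarrow> 'a \<Rightarrow> real"
  assumes r: "0 < r" and t: "0 \<le> t"
    and E: "\<And>k. distributed M lborel (E k) (exponential_density r)"
    and ind: "indep_vars (\<lambda>_. borel) E UNIV"
  shows "prob {w \<in> space M. count_proc (\<lambda>k. E k w) t = n} = (r * t) ^ n / fact n * exp (- (r * t))"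
proof -
  have [measurable]: "E k \<in> borel_measurable M" for k
    using distributed_measurable[OF E] by simp
  define L where "L k = {w \<in> space M. k < count_proc (\<lambda>i. E i w) t}" for k
  have [measurable]: "L k \<in> sets M" for k
    unfolding L_def by measurable
  have "AE w in M. \<forall>k. k < count_proc (\<lambda>i. E i w) t \<longleftrightarrow> (\<Sum>i\<le>k. E i w) \<le> t"
    using AE_exponentials_pos[where E=E, OF E r] AE_finite_partial_sums_le[OF r t E ind]
    by eventually_elim (simp add: count_proc_def less_card_partial_sums_le_iff less_imp_le)
  then have "prob (L k) = prob {w \<in> space M. (\<Sum>i\<le>k. E i w) \<le> t}" for k
    by (intro measure_eq_AE) (auto simp: L_def)
  then have prob_L: "prob (L k) = erlang_CDF k r t" for k
    using prob_partial_sum_le_eq_erlang_CDF[OF r t E ind] by simp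
  show ?thesis
  proof (cases n)
    case 0
    have "{w \<in> space M. count_proc (\<lambda>k. E k w) t = n} = space M - L 0"
      using 0 by (auto simp: L_def)
    then show ?thesis
      using 0 t by (simp add: prob_compl prob_L erlang_CDF_def)
  next
    case (Suc j)
    have "{w \<in> space M. count_proc (\<lambda>k. E k w) t = n} = L j - L n"
      using Suc by (auto simp: L_def)
    moreover have "L n \<subseteq> L j"
      using Suc by (auto simp: L_def)
    ultimately show ?thesis
      using Suc t by (simp add: finite_measure_Diff prob_L erlang_CDF_def)
  qed
qed

lemma nn_integral_power_geometric:
  fixes N :: "'a \<Rightarrow> nat"
  assumes [measurable]: "N \<in> measurable M (count_space UNIV)"
    and N: "\<And>n. prob {w \<in> space M. N w = n} = (1 - p) * p ^ n"
    and p: "0 \<le> p" "p < 1" and z: "0 \<le> z" "z * p < 1"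
  shows "(\<integral>\<^sup>+w. ennreal (z ^ N w) \<partial>M) = ennreal ((1 - p) / (1 - z * p))"
proof -
  have "(\<integral>\<^sup>+w. ennreal (z ^ N w) \<partial>M) = (\<Sum>n. ennreal (z ^ n) * ennreal ((1 - p) * p ^ n))"
    by (simp add: nn_integral_nat_valued[where f="\<lambda>n. ennreal (z ^ n)"] emeasure_eq_measure N)
  also have "\<dots> = (\<Sum>n. ennreal ((1 - p) * (z * p) ^ n))"
    using p z by (simp add: ennreal_mult[symmetric] power_mult_distrib mult_ac)
  also have "\<dots> = ennreal ((1 - p) * (1 / (1 - z * p)))"
    using p z by (intro suminf_ennreal_eq sums_mult geometric_sums) simp_all
  finally show ?thesis by simp
qed

lemma nn_integral_power_poisson:
  fixes N :: "'a \<Rightarrow> nat"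
  assumes [measurable]: "N \<in> measurable M (count_space UNIV)"
    and N: "\<And>k. prob {w \<in> space M. N w = k} = x ^ k / fact k * exp (- x)"
    and x: "0 \<le> x" and c: "0 \<le> c"
  shows "(\<integral>\<^sup>+w. ennreal (c ^ N w) \<partial>M) = ennreal (exp (x * (c - 1)))"
proof -
  have "(\<integral>\<^sup>+w. ennreal (c ^ N w) \<partial>M) = (\<Sum>k. ennreal (c ^ k) * ennreal (x ^ k / fact k * exp (- x)))"
    by (simp add: nn_integral_nat_valued[where f="\<lambda>n. ennreal (c ^ n)"] emeasure_eq_measure N)
  also have "\<dots> = (\<Sum>k. ennreal ((c * x) ^ k / fact k * exp (- (c * x)) * exp (x * (c - 1))))"
    using x c by (simp add: ennreal_mult[symmetric] power_mult_distrib exp_add[symmetric] algebra_simps)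
  also have "\<dots> = ennreal (1 * exp (x * (c - 1)))"
    using x c by (intro suminf_ennreal_eq sums_mult2 poisson_sums) simp
  finally show ?thesis by simp
qed

end

section \<open>A Chernoff bound for one server\<close>

lemma mult_sqrt_ratio_add_eq_neg_square_diff:
  assumes "0 < l" "0 < u"
  shows "l * (sqrt u / sqrt l - 1) + u * (sqrt l / sqrt u - 1) = - (sqrt u - sqrt l)\<^sup>2"
proof -
  have "sqrt l * sqrt l = l" "sqrt u * sqrt u = u"
    using assms by simp_all
  then have "l * (sqrt u / sqrt l) = sqrt l * sqrt u" "u * (sqrt l / sqrt u) = sqrt l * sqrt u"
    using assms by (auto simp: field_simps)
  then show ?thesis
    using assms by (simp add: algebra_simps power2_diff)
qed

lemma one_le_mult_power_power:
  fixes s z :: real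
  assumes "z * s = 1" "1 \<le> z" "c < n"
  shows "1 \<le> s * (z ^ n * s ^ c)"
proof -
  have "0 < s"
    using assms(1,2) zero_less_mult_pos[of z s] by simp
  have "1 = z ^ Suc c * s ^ Suc c"
    by (metis assms(1) power_mult_distrib power_one)
  also have "\<dots> \<le> z ^ n * s ^ Suc c"
    using assms(2,3) \<open>0 < s\<close> by (intro mult_right_mono power_increasing) auto
  also have "\<dots> = s * (z ^ n * s ^ c)"
    by simp
  finally show ?thesis .
qed

context prob_space
begin

lemma nn_integral_chernoff_weight:
  fixes X Y Z :: "'a \<Rightarrow> nat"
  assumes lu: "0 < l" "l < u" and t: "0 \<le> t"
    and indep: "indep_vars (\<lambda>_. count_space UNIV) (\<lambda>i. if i = 0 then X else if i = 1 then Y else Z) {0, 1, 2 :: nat}"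
    and X: "\<And>n. prob {w \<in> space M. X w = n} = (1 - l / u) * (l / u) ^ n"
    and Y: "\<And>k. prob {w \<in> space M. Y w = k} = (l * t) ^ k / fact k * exp (- (l * t))"
    and Z: "\<And>k. prob {w \<in> space M. Z w = k} = (u * t) ^ k / fact k * exp (- (u * t))"
  shows "(\<integral>\<^sup>+w. ennreal ((sqrt u / sqrt l) ^ X w) * ennreal ((sqrt u / sqrt l) ^ Y w)
            * ennreal ((sqrt l / sqrt u) ^ Z w) \<partial>M)
         = ennreal ((1 + sqrt l / sqrt u) * exp (- t * (sqrt u - sqrt l)\<^sup>2))"
proof -
  define s where "s = sqrt l / sqrt u"
  define z where "z = sqrt u / sqrt l"
  have s: "0 < s" "s < 1" and zs: "z * s = 1" and z: "1 \<le> z"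
    using lu by (auto simp: s_def z_def)
  have ss: "s * s = l / u"
    using lu by (simp add: s_def real_sqrt_divide[symmetric])
  have meas[measurable]: "X \<in> measurable M (count_space UNIV)" "Y \<in> measurable M (count_space UNIV)"
    "Z \<in> measurable M (count_space UNIV)"
    using indep unfolding indep_vars_def by (auto dest: bspec[of _ _ 0] bspec[of _ _ 1] bspec[of _ _ 2])
  define g where "g i n = ennreal (if i = 2 then s ^ n else z ^ n)" for i n :: nat
  have "(\<integral>\<^sup>+w. (\<Prod>i\<in>{0, 1, 2}. g i ((if i = 0 then X else if i = 1 then Y else Z) w)) \<partial>M)
      = (\<Prod>i\<in>{0, 1, 2}. \<integral>\<^sup>+w. g i ((if i = 0 then X else if i = 1 then Y else Z) w) \<partial>M)"
    by (intro indep_vars_nn_integral indep_vars_compose2[OF indep]) auto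
  then have "(\<integral>\<^sup>+w. ennreal (z ^ X w) * ennreal (z ^ Y w) * ennreal (s ^ Z w) \<partial>M)
      = (\<integral>\<^sup>+w. ennreal (z ^ X w) \<partial>M) * (\<integral>\<^sup>+w. ennreal (z ^ Y w) \<partial>M) * (\<integral>\<^sup>+w. ennreal (s ^ Z w) \<partial>M)"
    by (simp add: g_def mult.assoc)
  also have "\<dots> = ennreal ((1 + s) * exp (l * t * (z - 1) + u * t * (s - 1)))"
  proof -
    have "(\<integral>\<^sup>+w. ennreal (z ^ X w) \<partial>M) = ennreal ((1 - l / u) / (1 - z * (l / u)))"
      using lu z zs s mult_strict_mono[of s 1 s 1]
      by (intro nn_integral_power_geometric[OF meas(1) X]) (simp_all flip: ss add: mult.assoc[symmetric])
    also have "(1 - l / u) / (1 - z * (l / u)) = 1 + s"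
      using s zs by (simp flip: ss add: mult.assoc[symmetric] field_simps)
    finally show ?thesis
      using lu t z s
      by (simp add: nn_integral_power_poisson[OF meas(2) Y] nn_integral_power_poisson[OF meas(3) Z]
          ennreal_mult exp_add mult.assoc)
  qed
  also have "l * t * (z - 1) + u * t * (s - 1) = t * (l * (z - 1) + u * (s - 1))"
    by (simp add: algebra_simps)
  also have "\<dots> = - t * (sqrt u - sqrt l)\<^sup>2"
    using mult_sqrt_ratio_add_eq_neg_square_diff[of l u] lu unfolding z_def s_def by simp
  finally show ?thesis
    unfolding z_def s_def .
qed

lemma prob_poisson_lt_geometric_plus_poisson_le:
  fixes X Y Z :: "'a \<Rightarrow> nat"
  assumes lu: "0 < l" "l < u" and t: "0 \<le> t"
    and indep: "indep_vars (\<lambda>_. count_space UNIV) (\<lambda>i. if i = 0 then X else if i = 1 then Y else Z) {0, 1, 2 :: nat}"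
    and X: "\<And>n. prob {w \<in> space M. X w = n} = (1 - l / u) * (l / u) ^ n"
    and Y: "\<And>k. prob {w \<in> space M. Y w = k} = (l * t) ^ k / fact k * exp (- (l * t))"
    and Z: "\<And>k. prob {w \<in> space M. Z w = k} = (u * t) ^ k / fact k * exp (- (u * t))"
  shows "prob {w \<in> space M. Z w < X w + Y w} \<le> 2 * exp (- t * (sqrt u - sqrt l)\<^sup>2)"
proof -
  define s where "s = sqrt l / sqrt u"
  define z where "z = sqrt u / sqrt l"
  have s: "0 < s" "s < 1" and zs: "z * s = 1" and z: "1 \<le> z"
    using lu by (auto simp: s_def z_def)
  have meas[measurable]: "X \<in> measurable M (count_space UNIV)" "Y \<in> measurable M (count_space UNIV)"
    "Z \<in> measurable M (count_space UNIV)"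
    using indep unfolding indep_vars_def by (auto dest: bspec[of _ _ 0] bspec[of _ _ 1] bspec[of _ _ 2])
  then have [measurable]: "X \<in> borel_measurable M" "Y \<in> borel_measurable M" "Z \<in> borel_measurable M"
    by (simp_all add: borel_measurable_countable_iff)
  \<comment> \<open>Markov's inequality for the weight z^(X + Y - Z - 1), which is at least 1 on the event.\<close>
  have "indicator {w \<in> space M. Z w < X w + Y w} w
      \<le> ennreal s * (ennreal (z ^ X w) * ennreal (z ^ Y w) * ennreal (s ^ Z w))" for w
    using one_le_mult_power_power[OF zs z, of "Z w" "X w + Y w"] s z
    by (auto simp: indicator_def ennreal_mult[symmetric] power_add mult.assoc simp flip: ennreal_1 intro!: ennreal_leI)
  then have "emeasure M {w \<in> space M. Z w < X w + Y w}
      \<le> (\<integral>\<^sup>+w. ennreal s * (ennreal (z ^ X w) * ennreal (z ^ Y w) * ennreal (s ^ Z w)) \<partial>M)"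
    by (simp add: nn_integral_mono flip: nn_integral_indicator)
  also have "\<dots> = ennreal s * (\<integral>\<^sup>+w. ennreal (z ^ X w) * ennreal (z ^ Y w) * ennreal (s ^ Z w) \<partial>M)"
    by (rule nn_integral_cmult) measurable
  also have "\<dots> = ennreal (s * ((1 + s) * exp (- t * (sqrt u - sqrt l)\<^sup>2)))"
    using s nn_integral_chernoff_weight[OF lu t indep X Y Z, folded s_def z_def]
    by (subst ennreal_mult[of s]) auto
  finally have "prob {w \<in> space M. Z w < X w + Y w} \<le> s * (1 + s) * exp (- t * (sqrt u - sqrt l)\<^sup>2)"
    using s by (simp add: emeasure_eq_measure mult.assoc)
  also have "\<dots> \<le> 2 * exp (- t * (sqrt u - sqrt l)\<^sup>2)"
    using s mult_mono[of s 1 "1 + s" 2] by (intro mult_right_mono) auto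
  finally show ?thesis .
qed

lemma prob_queue_len_ne_le:
  fixes Q :: "'a \<Rightarrow> nat" and A S :: "nat \<Rightarrow> 'a \<Rightarrow> real"
  assumes lu: "0 < l" "l < u" and t: "0 \<le> t"
    and Q: "\<And>n. prob {w \<in> space M. Q w = n} = (1 - l / u) * (l / u) ^ n"
    and A: "\<And>k. distributed M lborel (A k) (exponential_density l)"
    and S: "\<And>k. distributed M lborel (S k) (exponential_density u)"
    and indA: "indep_vars (\<lambda>_. borel) A UNIV" and indS: "indep_vars (\<lambda>_. borel) S UNIV"
    and indep: "indep_vars (\<lambda>_. count_space UNIV) (\<lambda>i. if i = 0 then Q
      else if i = 1 then (\<lambda>w. count_proc (\<lambda>k. A k w) t) else (\<lambda>w. count_proc (\<lambda>k. S k w) t)) {0, 1, 2 :: nat}"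
  shows "prob {w \<in> space M. queue_len 0 (\<lambda>k. A k w) (\<lambda>k. S k w) t
                              \<noteq> queue_len (Q w) (\<lambda>k. A k w) (\<lambda>k. S k w) t}
           \<le> 2 * exp (- t * (sqrt u - sqrt l)\<^sup>2)"
proof -
  have [measurable]: "Q \<in> measurable M (count_space UNIV)"
    using indep unfolding indep_vars_def by (auto dest: bspec[of _ _ 0])
  have [measurable]: "A k \<in> borel_measurable M" "S k \<in> borel_measurable M" for k
    using distributed_measurable[OF A] distributed_measurable[OF S] by simp_all
  have [measurable]: "Q \<in> borel_measurable M" "(\<lambda>w. count_proc (\<lambda>k. A k w) t) \<in> borel_measurable M"
    "(\<lambda>w. count_proc (\<lambda>k. S k w) t) \<in> borel_measurable M"
    unfolding borel_measurable_countable_iff by measurable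
  have "AE w in M. finite {n. (\<Sum>k\<le>n. S k w) \<le> t}"
    using AE_finite_partial_sums_le[OF _ t S indS] lu by simp
  then have "AE w in M. queue_len 0 (\<lambda>k. A k w) (\<lambda>k. S k w) t \<noteq> queue_len (Q w) (\<lambda>k. A k w) (\<lambda>k. S k w) t
      \<longrightarrow> count_proc (\<lambda>k. S k w) t < Q w + count_proc (\<lambda>k. A k w) t"
  proof eventually_elim
    case (elim w)
    show ?case
    proof (rule impI, rule ccontr)
      assume ne: "queue_len 0 (\<lambda>k. A k w) (\<lambda>k. S k w) t \<noteq> queue_len (Q w) (\<lambda>k. A k w) (\<lambda>k. S k w) t"
        and "\<not> count_proc (\<lambda>k. S k w) t < Q w + count_proc (\<lambda>k. A k w) t"
      then have "netput (Q w) (\<lambda>k. A k w) (\<lambda>k. S k w) t \<le> 0"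
        by (simp add: netput_def)
      with ne show False
        using queue_len_eq_if_netput_nonpos[OF elim t] by blast
    qed
  qed
  then have "prob {w \<in> space M. queue_len 0 (\<lambda>k. A k w) (\<lambda>k. S k w) t
                              \<noteq> queue_len (Q w) (\<lambda>k. A k w) (\<lambda>k. S k w) t}
      \<le> prob {w \<in> space M. count_proc (\<lambda>k. S k w) t < Q w + count_proc (\<lambda>k. A k w) t}"
    by (intro finite_measure_mono_AE) measurable
  also have "\<dots> \<le> 2 * exp (- t * (sqrt u - sqrt l)\<^sup>2)"
    using lu by (intro prob_poisson_lt_geometric_plus_poisson_le[OF lu t indep Q]
        prob_count_proc_eq_poisson[OF _ t A indA] prob_count_proc_eq_poisson[OF _ t S indS]) auto
  finally show ?thesis .
qed

end

section \<open>Independence of the components of one server\<close>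

context prob_space
begin

lemma indep_vars_reindex:
  assumes ind: "indep_vars M' X I" and f: "inj f" "range f \<subseteq> I"
  shows "indep_vars (\<lambda>k. M' (f k)) (\<lambda>k. X (f k)) UNIV"
proof -
  have "indep_vars (\<lambda>k. Pi\<^sub>M {f k} M') (\<lambda>k \<omega>. restrict (\<lambda>i. X i \<omega>) {f k}) UNIV"
    using f by (intro indep_vars_restrict[OF ind]) (auto simp: disjoint_family_on_def inj_def)
  then have "indep_vars (\<lambda>k. M' (f k)) (\<lambda>k \<omega>. (\<lambda>g. g (f k)) (restrict (\<lambda>i. X i \<omega>) {f k})) UNIV"
    by (rule indep_vars_compose2) (rule measurable_component_singleton, simp)
  then show ?thesis
    by simp
qed

lemma indep_vars_server:
  fixes Q0 :: "nat \<Rightarrow> 'a \<Rightarrow> nat" and EA ES :: "nat \<Rightarrow> nat \<Rightarrow> 'a \<Rightarrow> real"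
  assumes indep: "indep_vars (\<lambda>_. borel) (src_rv Q0 EA ES) (src_set J)" and j: "j \<in> {1..J}"
  shows "indep_vars (\<lambda>_. borel) (EA j) UNIV" and "indep_vars (\<lambda>_. borel) (ES j) UNIV"
    and "indep_vars (\<lambda>_. count_space UNIV) (\<lambda>i. if i = 0 then Q0 j
      else if i = 1 then (\<lambda>w. count_proc (\<lambda>k. EA j k w) t) else (\<lambda>w. count_proc (\<lambda>k. ES j k w) t)) {0, 1, 2 :: nat}"
proof -
  have "inj (Arr j)" "range (Arr j) \<subseteq> src_set J" "inj (Srv j)" "range (Srv j) \<subseteq> src_set J"
    using j by (auto simp: inj_def src_set_def)
  then show "indep_vars (\<lambda>_. borel) (EA j) UNIV" "indep_vars (\<lambda>_. borel) (ES j) UNIV"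
    using indep_vars_reindex[OF indep, of "Arr j"] indep_vars_reindex[OF indep, of "Srv j"]
    by (simp_all add: src_rv_def)
  define K where "K i = (if i = 0 then {Init j} else if i = 1 then range (Arr j) else range (Srv j))" for i :: nat
  \<comment> \<open>Q0 j enters the family of sources as a real number, so it is recovered by nat of the floor.\<close>
  define Y where "Y i f = (if i = 0 then nat \<lfloor>f (Init j)\<rfloor> else if i = 1 then count_proc (\<lambda>k. f (Arr j k)) t
    else count_proc (\<lambda>k. f (Srv j k)) t)" for i :: nat and f :: "src \<Rightarrow> real"
  have "indep_vars (\<lambda>i. Pi\<^sub>M (K i) (\<lambda>_. borel)) (\<lambda>i w. restrict (\<lambda>x. src_rv Q0 EA ES x w) (K i)) {0, 1, 2}"
    using j by (intro indep_vars_restrict[OF indep]) (auto simp: K_def src_set_def disjoint_family_on_def)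
  moreover have "Y i \<in> measurable (Pi\<^sub>M (K i) (\<lambda>_. borel)) (count_space UNIV)" if "i \<in> {0, 1, 2}" for i
  proof -
    have [measurable]: "(\<lambda>f. f x) \<in> borel_measurable (Pi\<^sub>M (K i) (\<lambda>_. borel))" if "x \<in> K i" for x
      using that by (rule measurable_component_singleton)
    show ?thesis
      using that unfolding Y_def K_def by auto measurable
  qed
  ultimately have "indep_vars (\<lambda>_. count_space UNIV) (\<lambda>i w. Y i (restrict (\<lambda>x. src_rv Q0 EA ES x w) (K i))) {0, 1, 2}"
    by (rule indep_vars_compose2)
  then show "indep_vars (\<lambda>_. count_space UNIV) (\<lambda>i. if i = 0 then Q0 j
      else if i = 1 then (\<lambda>w. count_proc (\<lambda>k. EA j k w) t) else (\<lambda>w. count_proc (\<lambda>k. ES j k w) t)) {0, 1, 2 :: nat}"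
    by (rule indep_vars_cong[THEN iffD1, OF refl _ refl, rotated])
      (auto simp: Y_def K_def src_rv_def)
qed

end

section \<open>The time horizon and the union bound\<close>

(* The square root in alpha_bound is at least 3 sqrt (l u) |ln (l / u)|, which turns the
   numerator into 3 ln (l / u) (sqrt l + sqrt u)^2. *)
lemma alpha_bound_mult_sqrt_diff_sq_ge:
  assumes l: "0 < l" and lu: "l < u"
  shows "3 / 2 \<le> alpha_bound l u * (sqrt u - sqrt l)\<^sup>2"
proof -
  define L where "L = ln (l / u)"
  have L: "L < 0"
    using l lu by (simp add: L_def)
  have sqrt_lu: "sqrt (l * u) = sqrt l * sqrt u"
    by (simp add: real_sqrt_mult)
  have "- 3 * sqrt (l * u) * L = sqrt (9 * l * u * L\<^sup>2)"
    using L l lu by (simp add: real_sqrt_mult real_sqrt_abs power2_eq_square)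
  also have "\<dots> \<le> sqrt ((u - l)\<^sup>2 + 9 * l * u * L\<^sup>2)"
    by (rule real_sqrt_le_mono) simp
  finally have "3 * (l + u) * L - 2 * sqrt ((u - l)\<^sup>2 + 9 * l * u * L\<^sup>2) \<le> 3 * L * (sqrt l + sqrt u)\<^sup>2"
    using l lu sqrt_lu by (simp add: power2_sum algebra_simps)
  then have "3 * L * (sqrt l + sqrt u)\<^sup>2 / (2 * (u - l)\<^sup>2 * L) \<le> alpha_bound l u"
    unfolding alpha_bound_def Let_def L_def[symmetric]
    using L by (intro divide_right_mono_neg) (simp_all add: mult_nonneg_nonpos)
  moreover have "(u - l)\<^sup>2 = (sqrt u - sqrt l)\<^sup>2 * (sqrt l + sqrt u)\<^sup>2"
    using l lu by (simp flip: power_mult_distrib add: algebra_simps)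
  moreover have "0 < sqrt l + sqrt u" "sqrt l < sqrt u"
    using l lu by (simp_all add: add_pos_pos)
  ultimately have "3 / (2 * (sqrt u - sqrt l)\<^sup>2) \<le> alpha_bound l u"
    using L by (simp add: field_simps)
  then show ?thesis
    using \<open>sqrt l < sqrt u\<close> by (simp add: field_simps)
qed

lemma le_mult_sqrt_diff_sq_if_alpha_bound_le:
  assumes lu: "0 < l" "l < u" and alpha: "alpha_bound l u \<le> alpha"
    and L: "0 \<le> L" and t: "alpha * L \<le> t"
  shows "L \<le> t * (sqrt u - sqrt l)\<^sup>2"
proof -
  have "1 \<le> alpha_bound l u * (sqrt u - sqrt l)\<^sup>2"
    using alpha_bound_mult_sqrt_diff_sq_ge[OF lu] by simp
  also have "\<dots> \<le> alpha * (sqrt u - sqrt l)\<^sup>2"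
    using alpha by (simp add: mult_right_mono)
  finally have "1 \<le> alpha * (sqrt u - sqrt l)\<^sup>2" .
  then have "L * 1 \<le> L * (alpha * (sqrt u - sqrt l)\<^sup>2)"
    using L by (rule mult_left_mono)
  then have "L \<le> (alpha * L) * (sqrt u - sqrt l)\<^sup>2"
    by (simp add: mult_ac)
  also have "\<dots> \<le> t * (sqrt u - sqrt l)\<^sup>2"
    using t by (simp add: mult_right_mono)
  finally show ?thesis .
qed

lemma mult_le_powr_self:
  fixes beta L :: real
  assumes beta: "1 < beta" and L: "beta powr (1 / (beta - 1)) \<le> L"
  shows "beta * L \<le> L powr beta"
proof -
  have "0 < beta powr (1 / (beta - 1))"
    using beta by simp
  with L have "0 < L"
    by linarith
  have "beta = (beta powr (1 / (beta - 1))) powr (beta - 1)"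
    using beta by (simp add: powr_powr)
  also have "\<dots> \<le> L powr (beta - 1)"
    using beta L by (intro powr_mono2) auto
  finally have "L * beta \<le> L * L powr (beta - 1)"
    using \<open>0 < L\<close> by simp
  also have "\<dots> = L powr beta"
    using \<open>0 < L\<close> by (simp add: powr_diff)
  finally show ?thesis
    by (simp add: mult.commute)
qed

lemma twice_mult_exp_neg_le_inverse_powr:
  fixes beta x :: real and J m :: nat
  assumes beta: "1 < beta" and J: "1 \<le> J" and m: "1 \<le> m"
    and mC: "exp (beta powr (1 / (beta - 1))) / (2 * real J) \<le> real m"
    and x: "ln (2 * real J * real m) powr beta \<le> x"
  shows "real J * (2 * exp (- x)) \<le> 1 / real m powr beta"
proof -
  define N where "N = 2 * real J * real m"
  have N: "2 \<le> N"
    using J m mult_mono[of 1 "real J" 1 "real m"] by (simp add: N_def)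
  have "exp (beta powr (1 / (beta - 1))) \<le> N"
    using mC J by (simp add: N_def pos_divide_le_eq mult_ac)
  then have "beta powr (1 / (beta - 1)) \<le> ln N"
    using N by (simp add: ln_ge_iff)
  then have "beta * ln N \<le> x"
    using mult_le_powr_self[OF beta] x unfolding N_def by (meson order.trans)
  then have "exp (- x) \<le> exp (- (beta * ln N))"
    by simp
  also have "\<dots> = 1 / N powr beta"
    using N by (simp add: powr_def exp_minus divide_inverse mult.commute)
  finally have "2 * real J * exp (- x) \<le> 2 * real J * (1 / N powr beta)"
    by (rule mult_left_mono) simp
  then have "real J * (2 * exp (- x)) \<le> 2 * real J / N powr beta"
    by simp
  also have "\<dots> \<le> (2 * real J) powr beta / N powr beta"
    using J beta powr_mono[of 1 beta "2 * real J"] by (intro divide_right_mono) simp_all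
  also have "\<dots> = 1 / real m powr beta"
    using J m by (simp add: N_def powr_mult)
  finally show ?thesis .
qed

lemma (in prob_space) prob_Ball_ge:
  assumes "finite I" and "\<And>i. i \<in> I \<Longrightarrow> {w \<in> space M. P i w} \<in> events"
    and "\<And>i. i \<in> I \<Longrightarrow> prob {w \<in> space M. \<not> P i w} \<le> p"
  shows "1 - real (card I) * p \<le> prob {w \<in> space M. \<forall>i\<in>I. P i w}"
proof -
  have "{w \<in> space M. \<forall>i\<in>I. P i w} \<in> events"
    using assms by (simp add: sets.sets_Collect_finite_All)
  then have "1 - prob {w \<in> space M. \<forall>i\<in>I. P i w} = prob (space M - {w \<in> space M. \<forall>i\<in>I. P i w})"
    by (simp add: prob_compl)
  also have "space M - {w \<in> space M. \<forall>i\<in>I. P i w} = (\<Union>i\<in>I. {w \<in> space M. \<not> P i w})"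
    by auto
  also have "prob (\<Union>i\<in>I. {w \<in> space M. \<not> P i w}) \<le> (\<Sum>i\<in>I. prob {w \<in> space M. \<not> P i w})"
    using assms by (intro finite_measure_subadditive_finite) auto
  also have "\<dots> \<le> real (card I) * p"
    using sum_mono[of I _ "\<lambda>_. p"] assms(3) by simp
  finally show ?thesis
    by simp
qed

theorem lemma7:
  fixes J :: nat and mu :: "nat \<Rightarrow> real" and Acts :: "'act set"
    and lam :: "'act \<Rightarrow> nat \<Rightarrow> real" and alpha beta :: real and m :: nat
    and a :: 'act and M :: "'w measure"
    and Q0 :: "nat \<Rightarrow> 'w \<Rightarrow> nat" and EA ES :: "nat \<Rightarrow> nat \<Rightarrow> 'w \<Rightarrow> real"
    and t :: real
  assumes J: "J \<ge> 1"
    and mu_pos: "\<forall>j\<in>{1..J}. mu j > 0"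
    and Acts: "finite Acts"
    and lam_pos: "\<forall>b\<in>Acts. \<forall>j\<in>{1..J}. lam b j > 0"
    and load: "\<forall>b\<in>Acts. \<forall>j\<in>{1..J}. lam b j / mu j < 1"
    and alpha: "\<forall>b\<in>Acts. \<forall>j\<in>{1..J}. alpha \<ge> alpha_bound (lam b j) (mu j) \<and> alpha \<ge> 1"
    and beta: "beta > 1"
    and m: "m \<ge> 1"
    and mC: "real m \<ge> exp (beta powr (1 / (beta - 1))) / (2 * real J)"
    and a: "a \<in> Acts"
    and M: "prob_space M"
    and Q0_meas: "\<forall>j\<in>{1..J}. Q0 j \<in> measurable M (count_space UNIV)"
    and Q0_dist: "\<forall>j\<in>{1..J}. \<forall>n::nat.
         measure M {w \<in> space M. Q0 j w = n} = (1 - lam a j / mu j) * (lam a j / mu j) ^ n"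
    and EA_dist: "\<forall>j\<in>{1..J}. \<forall>k. distributed M lborel (EA j k) (exponential_density (lam a j))"
    and ES_dist: "\<forall>j\<in>{1..J}. \<forall>k. distributed M lborel (ES j k) (exponential_density (mu j))"
    and indep: "prob_space.indep_vars M (\<lambda>_. borel) (src_rv Q0 EA ES) (src_set J)"
    and t: "t \<ge> alpha * (ln (2 * real J * real m)) powr beta"
  shows "measure M {w \<in> space M. \<forall>j\<in>{1..J}.
            queue_len 0 (\<lambda>k. EA j k w) (\<lambda>k. ES j k w) t
              = queue_len (Q0 j w) (\<lambda>k. EA j k w) (\<lambda>k. ES j k w) t}
         \<ge> 1 - 1 / real m powr beta"
proof -
  interpret prob_space M
    by (rule M)
  define L where "L = ln (2 * real J * real m) powr beta"
  have "1 \<le> alpha" "0 \<le> L"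
    using bspec[OF bspec[OF alpha a], of 1] J by (simp_all add: L_def)
  then have "0 \<le> t"
    using t mult_nonneg_nonneg[of alpha L] unfolding L_def by linarith
  have "1 - real (card {1..J}) * (2 * exp (- L)) \<le> measure M {w \<in> space M. \<forall>j\<in>{1..J}.
      queue_len 0 (\<lambda>k. EA j k w) (\<lambda>k. ES j k w) t = queue_len (Q0 j w) (\<lambda>k. EA j k w) (\<lambda>k. ES j k w) t}"
  proof (rule prob_Ball_ge)
    fix j assume j: "j \<in> {1..J}"
    show "{w \<in> space M. queue_len 0 (\<lambda>k. EA j k w) (\<lambda>k. ES j k w) t
        = queue_len (Q0 j w) (\<lambda>k. EA j k w) (\<lambda>k. ES j k w) t} \<in> events"
      using Q0_meas j distributed_measurable[OF EA_dist[rule_format, OF j]]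
        distributed_measurable[OF ES_dist[rule_format, OF j]] by (intro sets_Collect_queue_len_eq) auto
    have "0 < lam a j" "0 < mu j" "lam a j / mu j < 1" "alpha_bound (lam a j) (mu j) \<le> alpha"
      using lam_pos mu_pos load alpha a j by auto
    then have lu: "0 < lam a j" "lam a j < mu j" and L: "L \<le> t * (sqrt (mu j) - sqrt (lam a j))\<^sup>2"
      using le_mult_sqrt_diff_sq_if_alpha_bound_le t by (simp_all add: divide_less_eq L_def)
    show "prob {w \<in> space M. queue_len 0 (\<lambda>k. EA j k w) (\<lambda>k. ES j k w) t
        \<noteq> queue_len (Q0 j w) (\<lambda>k. EA j k w) (\<lambda>k. ES j k w) t} \<le> 2 * exp (- L)"
      using L by (intro order.trans[OF prob_queue_len_ne_le[OF lu \<open>0 \<le> t\<close> Q0_dist[rule_format, OF j]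
          EA_dist[rule_format, OF j] ES_dist[rule_format, OF j] indep_vars_server[OF indep j]]]) simp
  qed simp
  moreover have "real J * (2 * exp (- L)) \<le> 1 / real m powr beta"
    by (rule twice_mult_exp_neg_le_inverse_powr[OF beta J m mC]) (simp add: L_def)
  ultimately show ?thesis
    by simp
qed

end
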